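(* Let $\lambda>0$, $\lambda_{max}>0$ and $p\in(0,1]$. For $q\in(0,1]$ let $r(q)=\min\{p/q,1\}$ (so $r(q)q=\min\{p,q\}$, and set $r(0)\cdot 0=0$), and for $q,\tilde q\in[0,1]$ let $$\mathrm{TH}(q,\tilde q)=r(q)\,q\,\exp\!\Big(-\frac{\lambda\, r(\tilde q)\,\tilde q}{\lambda_{max}}\Big).$$ Call $q^*\in[0,1]$ a symmetric Nash equilibrium (SNE) if $\mathrm{TH}(q^*,q^* )=\max_{q\in[0,1]}\mathrm{TH}(q,q^* )$. Then every $q^*$ with $p\le q^*\le 1$ is an SNE. Moreover, at any SNE $q^*$, $\mathrm{TH}(q^*,q^* )=p\exp\!\big(-\frac{p\lambda}{\lambda_{max}}\big)$, and the transmission capacity $C=\lambda\,\mathrm{TH}(q^*,q^* )$ equals $\lambda p\exp\!\big(-\frac{p\lambda}{\lambda_{max}}\big)$.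
   Context: Game-theoretic ALOHA model with infinite battery capacity: transmitters form a homogeneous Poisson point process of density $\lambda$ in $\mathbb{R}^2$; each harvests one energy unit per slot with probability $p$ and, when its battery is nonempty, transmits with its own probability. $\mathrm{TH}(q,\tilde q)$ is the throughput of a transmitter using transmission probability $q$ when all other transmitters use $\tilde q$; $r(q)$ is the stationary probability of a nonempty battery; $\lambda_{max}=\frac{1}{d^2\theta^{2/\alpha}\kappa(\alpha)}$ with $\kappa(\alpha)=\frac{2\pi^2}{\alpha\sin(2\pi/\alpha)}$. *)

theory Defs
  imports "HOL-Analysis.Analysis"
begin

text \<open>Stationary probability of a nonempty battery: r(q) = min(p/q, 1).
  Note p / 0 = 0 in Isabelle, so r p 0 * 0 = 0 as in the paper's convention.\<close>
definition r :: "real \<Rightarrow> real \<Rightarrow> real" where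
  "r p q = min (p / q) 1"

definition TH :: "real \<Rightarrow> real \<Rightarrow> real \<Rightarrow> real \<Rightarrow> real \<Rightarrow> real" where
  "TH lam lmax p q qt = r p q * q * exp (- (lam * (r p qt * qt)) / lmax)"

definition SNE :: "real \<Rightarrow> real \<Rightarrow> real \<Rightarrow> real \<Rightarrow> bool" where
  "SNE lam lmax p qs \<longleftrightarrow> qs \<in> {0..1} \<and>
     (\<forall>q\<in>{0..1}. TH lam lmax p q qs \<le> TH lam lmax p qs qs)"

end

theory Submission
  imports Defs
begin

text \<open>Since \<open>r(q) q = min p q\<close>, a player's throughput against a fixed opponent profile is
  \<open>min p q\<close> times a positive factor independent of its own \<open>q\<close>.  Hence the best responses are
  exactly \<open>q \<ge> p\<close>, so the SNEs are the \<open>q* \<in> [p,1]\<close>, and there \<open>r(q*) q* = p\<close>.\<close>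

lemma r_mult_eq_min:
  assumes "0 \<le> q" "0 < p"
  shows "r p q * q = min p q"
proof (cases "q = 0")
  case True
  then show ?thesis using assms by (simp add: r_def)
next
  case False
  with assms have "q > 0" by simp
  then show ?thesis
    unfolding r_def by (cases "p \<le> q") (auto simp: min_def field_simps)
qed

lemma TH_eq_min:
  assumes "0 \<le> q" "0 < p"
  shows "TH lam lmax p q qt = min p q * exp (- (lam * (r p qt * qt)) / lmax)"
  using r_mult_eq_min[OF assms] unfolding TH_def by simp

lemma SNE_iff:
  assumes "0 < p" "p \<le> 1"
  shows "SNE lam lmax p qs \<longleftrightarrow> p \<le> qs \<and> qs \<le> 1"
proof
  assume "SNE lam lmax p qs"
  then have qs: "qs \<in> {0..1}" and "TH lam lmax p 1 qs \<le> TH lam lmax p qs qs"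
    unfolding SNE_def by auto
  then have "p * exp (- (lam * (r p qs * qs)) / lmax)
      \<le> min p qs * exp (- (lam * (r p qs * qs)) / lmax)"
    using TH_eq_min[of 1 p] TH_eq_min[of qs p] assms by auto
  then have "p \<le> min p qs" by simp
  with qs show "p \<le> qs \<and> qs \<le> 1" by simp
next
  assume qs: "p \<le> qs \<and> qs \<le> 1"
  have "TH lam lmax p q qs \<le> TH lam lmax p qs qs" if "q \<in> {0..1}" for q
  proof -
    have "min p q \<le> min p qs" using qs by auto
    then show ?thesis
      using TH_eq_min[of q p] TH_eq_min[of qs p] that qs assms by (simp add: mult_right_mono)
  qed
  with qs assms show "SNE lam lmax p qs" unfolding SNE_def by auto
qed

lemma TH_diag_above_p:
  assumes "0 < p" "p \<le> qs"
  shows "TH lam lmax p qs qs = p * exp (- (p * lam) / lmax)"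
proof -
  have "r p qs * qs = p" using r_mult_eq_min[of qs p] assms by simp
  then show ?thesis unfolding TH_def by (simp add: mult.commute)
qed

theorem theorem3:
  fixes lam lmax p :: real
  assumes "lam > 0" and "lmax > 0" and "0 < p" and "p \<le> 1"
  shows "(\<forall>qs. p \<le> qs \<and> qs \<le> 1 \<longrightarrow> SNE lam lmax p qs) \<and>
         (\<forall>qs. SNE lam lmax p qs \<longrightarrow>
             TH lam lmax p qs qs = p * exp (- (p * lam) / lmax) \<and>
             lam * TH lam lmax p qs qs = lam * p * exp (- (p * lam) / lmax))"
  using SNE_iff[OF assms(3,4)] TH_diag_above_p[OF assms(3)] by auto

end
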